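(* Let $\xi\in(0,1)$, $C=1-\xi$, and let $\lambda(x)=\sum_{i\ge2}\lambda_ix^{i-1}$, $\rho(x)=\sum_{j\ge2}\rho_jx^{j-1}$ be degree distributions. Let $b=\int_0^1\rho(x)dx$, $R=1-\frac{\int_0^1\rho(x)dx}{\int_0^1\lambda(x)dx}$ and $\Delta R=C-R$. Then $$\int_0^1\rho(1-x)\,dx-\int_0^\xi\bigl[1-\lambda^{-1}(x/\xi)\bigr]dx=\frac{b\,\Delta R}{\xi+\Delta R},$$ where $\lambda^{-1}$ denotes the inverse function of $\lambda:[0,1]\to[0,1]$.
   Context: A degree distribution is a polynomial $\gamma(x)=\sum_{k\ge2}\gamma_kx^{k-1}$ with $\gamma_k\ge0$ and $\sum_k\gamma_k=1$; in particular $\lambda$ is strictly increasing on $[0,1]$ with $\lambda(0)=0$, $\lambda(1)=1$, so $\lambda^{-1}$ is well defined on $[0,1]$. *)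

theory Defs
  imports "HOL-Analysis.Analysis" "HOL-Computational_Algebra.Polynomial"
begin

text \<open>A degree distribution gamma(x) = sum over k>=2 of gamma_k x^(k-1), represented as a real
polynomial whose coefficient of x^(k-1) is gamma_k: constant coefficient 0, all coefficients
nonnegative, coefficients summing to 1.\<close>
definition degree_distribution :: "real poly \<Rightarrow> bool" where
  "degree_distribution p \<longleftrightarrow>
     coeff p 0 = 0 \<and> (\<forall>i. coeff p i \<ge> 0) \<and> (\<Sum>i\<le>degree p. coeff p i) = 1"

end

theory Submission
  imports Defs
begin

text \<open>The reflection x \<mapsto> 1 - x turns the first one
into b, the integral of \<rho> over [0,1]. For the second, since \<lambda> maps [0,1] increasingly onto
itself, the area under its inverse is the complement in the unit square of the area under \<lambda>;
after rescaling by \<xi> the second integral is therefore \<xi> a, where a is the integral of \<lambda> over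
[0,1]. The right-hand side is b - \<xi> a as well, because \<xi> + \<Delta>R = b / a.\<close>

lemma integral_reflect_Icc:
  fixes f :: "real \<Rightarrow> 'b::real_normed_vector"
  shows "integral {a..b} (\<lambda>x. f (a + b - x)) = integral {a..b} f"
proof -
  have "integral {a..b} (\<lambda>x. f (a + b - x)) = integral {-b..-a} (\<lambda>x. f (a + b + x))"
    using Henstock_Kurzweil_Integration.integral_reflect_real[of "-a" "-b" "\<lambda>x. f (a + b + x)"]
    by simp
  also have "\<dots> = integral {a..b} f"
    using integral_shift_real_ivl[of a "a + b" b f] by (simp add: add.commute)
  finally show ?thesis .
qed

lemma integral_rescale_unit_interval:
  fixes f :: "real \<Rightarrow> 'b::real_normed_vector"
  assumes "0 < c"
  shows "integral {0..c} (\<lambda>x. f (x / c)) = c *\<^sub>R integral {0..1} f"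
proof -
  have "(\<lambda>x. x * c) ` {0..1} = {0..c}"
    using assms image_mult_atLeastAtMost[of c 0 1] by (simp add: mult.commute)
  with integral_stretch_real[of "1 / c" 0 1 f] assms show ?thesis
    by (simp add: divide_inverse mult.commute)
qed

lemma strict_mono_on_image_Icc:
  fixes f :: "real \<Rightarrow> real"
  assumes "a \<le> b" "strict_mono_on {a..b} f" "continuous_on {a..b} f"
  shows "f ` {a..b} = {f a..f b}"
proof
  show "f ` {a..b} \<subseteq> {f a..f b}"
    using assms(1,2) by (auto intro!: strict_mono_on_leD[OF assms(2)])
  show "{f a..f b} \<subseteq> f ` {a..b}"
  proof
    fix y assume "y \<in> {f a..f b}"
    then obtain x where "x \<in> {a..b}" "f x = y"
      using IVT'[of f a y b] assms(1,3) by auto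
    then show "y \<in> f ` {a..b}" by blast
  qed
qed

text \<open>Substituting y = f x turns the integral of the inverse into that of x f'(x), which
integration by parts evaluates.\<close>
lemma has_integral_the_inv_into:
  fixes f f' :: "real \<Rightarrow> real"
  assumes "a \<le> b" and mono: "strict_mono_on {a..b} f"
    and deriv: "\<And>x. x \<in> {a..b} \<Longrightarrow> (f has_real_derivative f' x) (at x within {a..b})"
  shows "(the_inv_into {a..b} f has_integral b * f b - a * f a - integral {a..b} f) {f a..f b}"
proof -
  let ?g = "the_inv_into {a..b} f"
  have cont: "continuous_on {a..b} f"
    using deriv by (rule DERIV_continuous_on)
  have image: "f ` {a..b} = {f a..f b}"
    using assms(1) mono cont by (rule strict_mono_on_image_Icc)
  have inv: "?g (f x) = x" if "x \<in> {a..b}" for x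
    using the_inv_into_f_f[OF strict_mono_on_imp_inj_on[OF mono] that] .
  have cont_inv: "continuous_on {f a..f b} ?g"
    using continuous_on_inv[OF cont compact_Icc] inv image by metis
  then have "((\<lambda>x. f' x *\<^sub>R ?g (f x)) has_integral integral {f a..f b} ?g) {a..b}"
    using assms(1) image deriv by (intro has_integral_substitution) auto
  then have subst: "((\<lambda>x. x * f' x) has_integral integral {f a..f b} ?g) {a..b}"
    by (rule has_integral_eq[rotated]) (simp add: inv mult.commute)
  have "((\<lambda>x. f x + x * f' x) has_integral b * f b - a * f a) {a..b}"
    using assms(1) deriv
    by (intro fundamental_theorem_of_calculus)
       (auto intro!: derivative_eq_intros simp: has_real_derivative_iff_has_vector_derivative[symmetric])
  from has_integral_diff[OF this integrable_integral[OF integrable_continuous_real[OF cont]]]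
  have "((\<lambda>x. x * f' x) has_integral b * f b - a * f a - integral {a..b} f) {a..b}"
    by simp
  with subst have "integral {f a..f b} ?g = b * f b - a * f a - integral {a..b} f"
    using has_integral_unique by blast
  with integrable_integral[OF integrable_continuous_real[OF cont_inv]] show ?thesis
    by simp
qed

lemma strict_mono_on_poly_nonneg_coeffs:
  fixes p :: "real poly"
  assumes nonneg: "\<And>i. coeff p i \<ge> 0" and "0 < degree p"
  shows "strict_mono_on {0..} (poly p)"
proof (rule strict_mono_onI)
  fix x y :: real assume "x \<in> {0..}" "x < y"
  then have xy: "0 \<le> x" "x < y" by auto
  have "0 < lead_coeff p"
    using nonneg[of "degree p"] assms(2) by (metis leading_coeff_0_iff degree_0 order_le_neq_trans less_irrefl)
  have "0 < (\<Sum>i\<le>degree p. coeff p i * (y ^ i - x ^ i))"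
  proof (rule sum_pos2[of _ "degree p"])
    show "0 < lead_coeff p * (y ^ degree p - x ^ degree p)"
      using \<open>0 < lead_coeff p\<close> xy assms(2) by (simp add: power_strict_mono)
    show "0 \<le> coeff p i * (y ^ i - x ^ i)" for i
      using nonneg[of i] xy by (simp add: power_mono)
  qed auto
  also have "\<dots> = poly p y - poly p x"
    by (simp add: poly_altdef algebra_simps sum_subtractf)
  finally show "poly p x < poly p y" by simp
qed

lemma degree_distribution_poly_0:
  "degree_distribution p \<Longrightarrow> poly p 0 = 0"
  by (simp add: degree_distribution_def poly_0_coeff_0)

lemma degree_distribution_poly_1:
  "degree_distribution p \<Longrightarrow> poly p 1 = 1"
  by (simp add: degree_distribution_def poly_altdef)

lemma degree_distribution_degree_pos:
  "degree_distribution p \<Longrightarrow> 0 < degree p"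
  by (cases "degree p") (auto simp: degree_distribution_def)

lemma strict_mono_on_degree_distribution:
  "degree_distribution p \<Longrightarrow> strict_mono_on {0..1} (poly p)"
  using strict_mono_on_poly_nonneg_coeffs[of p] degree_distribution_degree_pos[of p]
  by (auto simp: degree_distribution_def elim!: monotone_on_subset)

lemma integral_degree_distribution_pos:
  assumes "degree_distribution p"
  shows "0 < integral {0..1} (poly p)"
proof -
  have "poly p 0 < poly p x" if "x \<in> {0<..<1}" for x
    using strict_mono_onD[OF strict_mono_on_degree_distribution[OF assms], of 0 x] that by simp
  then have "integral {0..1} (\<lambda>_::real. 0) < integral {0..1} (poly p)"
    using degree_distribution_poly_0[OF assms]
    by (intro integral_less_real) (auto intro: continuous_intros)
  then show ?thesis by simp
qed

theorem lemma1:
  fixes \<xi> :: real and lam rho :: "real poly"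
  assumes "0 < \<xi>" and "\<xi> < 1"
    and "degree_distribution lam" and "degree_distribution rho"
  shows "let C = 1 - \<xi>;
             b = integral {0..1} (poly rho);
             R = 1 - integral {0..1} (poly rho) / integral {0..1} (poly lam);
             \<Delta>R = C - R
         in integral {0..1} (\<lambda>x. poly rho (1 - x))
            - integral {0..\<xi>} (\<lambda>x. 1 - the_inv_into {0..1} (poly lam) (x / \<xi>))
            = b * \<Delta>R / (\<xi> + \<Delta>R)"
proof -
  define a where "a = integral {0..1} (poly lam)"
  define b where "b = integral {0..1} (poly rho)"
  have "0 < a" "0 < b"
    using integral_degree_distribution_pos assms(3,4) by (auto simp: a_def b_def)
  have reflect: "integral {0..1} (\<lambda>x. poly rho (1 - x)) = b"
    using integral_reflect_Icc[of 0 1 "poly rho"] by (simp add: b_def)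
  have "(the_inv_into {0..1} (poly lam) has_integral 1 - a) {0..1}"
    using has_integral_the_inv_into[of 0 1 "poly lam" "poly (pderiv lam)"] assms(3)
    by (simp add: a_def strict_mono_on_degree_distribution has_field_derivative_at_within
        degree_distribution_poly_0 degree_distribution_poly_1)
  then have "((\<lambda>u. 1 - the_inv_into {0..1} (poly lam) u) has_integral a) {0..1}"
    using has_integral_diff[OF has_integral_const_real[of 1 0 1]] by force
  then have rescale: "integral {0..\<xi>} (\<lambda>x. 1 - the_inv_into {0..1} (poly lam) (x / \<xi>)) = \<xi> * a"
    using integral_rescale_unit_interval[OF assms(1), of "\<lambda>u. 1 - the_inv_into {0..1} (poly lam) u"]
    by (simp add: integral_unique)
  show ?thesis
    unfolding Let_def reflect rescale a_def[symmetric] b_def[symmetric]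
    using \<open>0 < a\<close> \<open>0 < b\<close> by (simp add: field_simps)
qed

end
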